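(* Let $C=L_1;\ldots;L_D$ be a sorting network on $n$ channels containing no redundant comparators, and suppose that $C$ contains a comparator $(i,j)$ in layer $L_d$ with $j>i+1$. Then at least one of the channels $i$ and $j$ is used in some layer $L_{d'}$ with $d'>d$.
   Context: Channels are numbered $1,\ldots,n$. A comparator network is a sequence $C=L_1;\ldots;L_D$ of layers; each layer is a set of comparators $(i,j)$ with $1\le i<j\le n$, each channel occurring in at most one comparator of a layer. An input $\bar x\in\{0,1\}^n$ propagates: $\bar x_0=\bar x$, and $\bar x_k$ is obtained from $\bar x_{k-1}$ by, for each $(i,j)\in L_k$, putting the minimum of the values at positions $i,j$ at position $i$ and the maximum at position $j$. The output is $C(\bar x)=\bar x_D$; $C$ is a sorting network if $C(\bar x)$ is sorted non-decreasingly for all $\bar x\in\{0,1\}^n$. A comparator $(i,j)\in L_\ell$ is redundant if for every input $\bar x$ we have $(\bar x_{\ell-1})_i\le(\bar x_{\ell-1})_j$. A channel is used in layer $L_\ell$ if it occurs in some comparator of $L_\ell$. *)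

theory Defs
  imports Main
begin

type_synonym comparator = "nat \<times> nat"
type_synonym layer = "comparator set"
type_synonym network = "layer list"

definition layer_of :: "network \<Rightarrow> nat \<Rightarrow> layer" where
  "layer_of C l = C ! (l - 1)"

definition wf_layer :: "nat \<Rightarrow> layer \<Rightarrow> bool" where
  "wf_layer n L \<longleftrightarrow>
     (\<forall>(i,j)\<in>L. 1 \<le> i \<and> i < j \<and> j \<le> n) \<and>
     (\<forall>c\<in>L. \<forall>c'\<in>L. c \<noteq> c' \<longrightarrow>
        {fst c, snd c} \<inter> {fst c', snd c'} = {})"

definition wf_network :: "nat \<Rightarrow> network \<Rightarrow> bool" where
  "wf_network n C \<longleftrightarrow> (\<forall>L\<in>set C. wf_layer n L)"

definition apply_layer :: "layer \<Rightarrow> (nat \<Rightarrow> nat) \<Rightarrow> (nat \<Rightarrow> nat)" where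
  "apply_layer L x = (\<lambda>k.
     if \<exists>j. (k,j) \<in> L then min (x k) (x (THE j. (k,j) \<in> L))
     else if \<exists>i. (i,k) \<in> L then max (x (THE i. (i,k) \<in> L)) (x k)
     else x k)"

definition run :: "network \<Rightarrow> nat \<Rightarrow> (nat \<Rightarrow> nat) \<Rightarrow> (nat \<Rightarrow> nat)" where
  "run C k x = foldl (\<lambda>y L. apply_layer L y) x (take k C)"

definition net_output :: "network \<Rightarrow> (nat \<Rightarrow> nat) \<Rightarrow> (nat \<Rightarrow> nat)" where
  "net_output C x = run C (length C) x"

(* 0/1 inputs on channels 1..n (values on other positions are irrelevant) *)
definition binary_input :: "nat \<Rightarrow> (nat \<Rightarrow> nat) \<Rightarrow> bool" where
  "binary_input n x \<longleftrightarrow> (\<forall>k\<in>{1..n}. x k \<in> {0,1})"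

definition sorted_on :: "nat \<Rightarrow> (nat \<Rightarrow> nat) \<Rightarrow> bool" where
  "sorted_on n y \<longleftrightarrow> (\<forall>a b. 1 \<le> a \<and> a \<le> b \<and> b \<le> n \<longrightarrow> y a \<le> y b)"

definition sorting_network :: "nat \<Rightarrow> network \<Rightarrow> bool" where
  "sorting_network n C \<longleftrightarrow> wf_network n C \<and>
     (\<forall>x. binary_input n x \<longrightarrow> sorted_on n (net_output C x))"

definition redundant :: "nat \<Rightarrow> network \<Rightarrow> nat \<Rightarrow> comparator \<Rightarrow> bool" where
  "redundant n C l c \<longleftrightarrow>
     (\<forall>x. binary_input n x \<longrightarrow> run C (l - 1) x (fst c) \<le> run C (l - 1) x (snd c))"

definition no_redundant :: "nat \<Rightarrow> network \<Rightarrow> bool" where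
  "no_redundant n C \<longleftrightarrow>
     (\<forall>l\<in>{1..length C}. \<forall>c\<in>layer_of C l. \<not> redundant n C l c)"

definition used_in :: "nat \<Rightarrow> layer \<Rightarrow> bool" where
  "used_in k L \<longleftrightarrow> (\<exists>c\<in>L. k = fst c \<or> k = snd c)"

end

theory Submission
  imports Defs
begin

(* Suppose neither channel i nor j is used after layer d. Then the outputs on i and j are the
   minimum and the maximum of the two values u (on i) and v (on j) entering the comparator (i, j).
   For a 0/1 input whose number of ones w lies in the band n - j < w \<le> n - i, the sorted output
   is 0 on i and 1 on j, so {u, v} = {0, 1}; by monotonicity of the network, whether the
   comparator swaps (u = 1, v = 0) is then the same for any two comparable inputs of the band.
   Since j > i + 1 the band contains two consecutive weights, so any two of its inputs are joined
   by single-bit changes that stay inside it, and the comparator swaps either on every input of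
   the band or on none. Non-redundancy provides an input on which it swaps, whereas on the sorted
   input of the same weight the network acts as the identity and nothing is swapped. *)

section \<open>Comparator layers\<close>

lemma wf_layer_bounds: "wf_layer n L \<Longrightarrow> (a, b) \<in> L \<Longrightarrow> 1 \<le> a \<and> a < b \<and> b \<le> n"
  unfolding wf_layer_def by fast

lemma wf_layer_comparator_unique:
  assumes "wf_layer n L" "c \<in> L" "c' \<in> L" "k \<in> {fst c, snd c}" "k \<in> {fst c', snd c'}"
  shows "c = c'"
  using assms unfolding wf_layer_def by blast

lemma apply_layer_fst:
  assumes "wf_layer n L" "(a, b) \<in> L"
  shows "apply_layer L y a = min (y a) (y b)"
proof -
  have "b' = b" if "(a, b') \<in> L" for b'
    using wf_layer_comparator_unique[OF assms(1) that assms(2), of a] by simp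
  then have "(THE b'. (a, b') \<in> L) = b"
    using assms(2) by blast
  then show ?thesis
    using assms(2) unfolding apply_layer_def by auto
qed

lemma apply_layer_snd:
  assumes "wf_layer n L" "(a, b) \<in> L"
  shows "apply_layer L y b = max (y a) (y b)"
proof -
  have "a < b"
    using wf_layer_bounds[OF assms] by simp
  have "a' = a" if "(a', b) \<in> L" for a'
    using wf_layer_comparator_unique[OF assms(1) that assms(2), of b] by simp
  then have "(THE a'. (a', b) \<in> L) = a"
    using assms(2) by blast
  moreover have "(b, b') \<notin> L" for b'
    using wf_layer_comparator_unique[OF assms(1) _ assms(2), of "(b, b')" b] \<open>a < b\<close> by auto
  ultimately show ?thesis
    using assms(2) unfolding apply_layer_def by auto
qed

lemma apply_layer_unused: "\<not> used_in k L \<Longrightarrow> apply_layer L y k = y k"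
  unfolding apply_layer_def used_in_def by force

lemma apply_layer_cases:
  assumes "wf_layer n L"
  obtains "\<not> used_in k L" "apply_layer L y k = y k"
  | b where "(k, b) \<in> L" "apply_layer L y k = min (y k) (y b)"
  | a where "(a, k) \<in> L" "apply_layer L y k = max (y a) (y k)"
proof -
  consider "\<not> used_in k L" | b where "(k, b) \<in> L" | a where "(a, k) \<in> L"
    unfolding used_in_def by fastforce
  then show thesis
    by cases (use that apply_layer_unused apply_layer_fst[OF assms] apply_layer_snd[OF assms] in blast)+
qed

lemma apply_layer_mono:
  assumes "x \<le> x'"
  shows "apply_layer L x \<le> apply_layer L x'"
proof -
  have "min (x a) (x b) \<le> min (x' a) (x' b)" "max (x a) (x b) \<le> max (x' a) (x' b)" for a b
    using assms unfolding le_fun_def by (meson min.mono max.mono)+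
  then show ?thesis
    using assms unfolding apply_layer_def le_fun_def by simp
qed

lemma apply_layer_binary:
  assumes "wf_layer n L" "binary_input n x"
  shows "binary_input n (apply_layer L x)"
  unfolding binary_input_def
proof
  fix k assume k: "k \<in> {1..n}"
  have binary_at: "x k' \<in> {0, 1}" if "k' \<in> {1..n}" for k'
    using assms(2) that unfolding binary_input_def by blast
  show "apply_layer L x k \<in> {0, 1}"
  proof (cases rule: apply_layer_cases[OF assms(1), of k x])
    case (2 b)
    then show ?thesis
      using k binary_at[of b] binary_at[of k] wf_layer_bounds[OF assms(1) 2(1)] by auto
  next
    case (3 a)
    then show ?thesis
      using k binary_at[of a] binary_at[of k] wf_layer_bounds[OF assms(1) 3(1)] by auto
  qed (use k binary_at in simp)
qed

lemma apply_layer_sorted: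
  assumes "wf_layer n L" "sorted_on n x"
  shows "apply_layer L x = x"
proof
  fix k
  show "apply_layer L x k = x k"
  proof (cases rule: apply_layer_cases[OF assms(1), of k x])
    case (2 b)
    then show ?thesis
      using assms(2) wf_layer_bounds[OF assms(1) 2(1)] by (simp add: sorted_on_def)
  next
    case (3 a)
    then show ?thesis
      using assms(2) wf_layer_bounds[OF assms(1) 3(1)] by (simp add: sorted_on_def)
  qed simp
qed

section \<open>Running a network\<close>

lemma foldl_apply_layer_invariant:
  assumes "P x" "\<And>L y. L \<in> set Ls \<Longrightarrow> P y \<Longrightarrow> P (apply_layer L y)"
  shows "P (foldl (\<lambda>y L. apply_layer L y) x Ls)"
  using assms by (induction Ls arbitrary: x) auto

lemma run_invariant:
  assumes "P x" "\<And>L y. L \<in> set C \<Longrightarrow> P y \<Longrightarrow> P (apply_layer L y)"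
  shows "P (run C l x)"
  unfolding run_def using assms(1)
proof (rule foldl_apply_layer_invariant[where P = P])
  fix L y assume "L \<in> set (take l C)" "P y"
  then show "P (apply_layer L y)"
    using assms(2)[OF in_set_takeD] by blast
qed

lemma run_layer_of:
  assumes "1 \<le> d" "d \<le> length C"
  shows "run C d x = apply_layer (layer_of C d) (run C (d - 1) x)"
proof -
  have "take d C = take (d - 1) C @ [C ! (d - 1)]"
    using assms take_Suc_conv_app_nth[of "d - 1" C] by simp
  then show ?thesis
    unfolding run_def layer_of_def by simp
qed

lemma run_mono:
  assumes "x \<le> x'"
  shows "run C l x \<le> run C l x'"
proof -
  have "foldl (\<lambda>y L. apply_layer L y) x Ls \<le> foldl (\<lambda>y L. apply_layer L y) x' Ls" for Ls
    using assms by (induction Ls arbitrary: x x') (simp_all add: apply_layer_mono)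
  then show ?thesis
    unfolding run_def .
qed

lemma run_binary:
  assumes "wf_network n C" "binary_input n x"
  shows "binary_input n (run C l x)"
  using assms(2)
proof (rule run_invariant[where P = "binary_input n"])
  fix L y assume "L \<in> set C" "binary_input n y"
  then show "binary_input n (apply_layer L y)"
    using assms(1) apply_layer_binary unfolding wf_network_def by blast
qed

lemma run_sorted:
  assumes "wf_network n C" "sorted_on n x"
  shows "run C l x = x"
proof (rule run_invariant[where P = "\<lambda>y. y = x"])
  fix L y assume "L \<in> set C" "y = x"
  then show "apply_layer L y = x"
    using assms apply_layer_sorted unfolding wf_network_def by blast
qed simp

lemma used_in_wf_layer: "wf_layer n L \<Longrightarrow> used_in k L \<Longrightarrow> k \<in> {1..n}"
  unfolding used_in_def by (auto dest: wf_layer_bounds)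

lemma run_outside_channels:
  assumes "wf_network n C" "k \<notin> {1..n}"
  shows "run C l x k = x k"
proof (rule run_invariant[where P = "\<lambda>y. y k = x k"])
  fix L y assume "L \<in> set C" "y k = x k"
  then have "wf_layer n L"
    using assms(1) unfolding wf_network_def by blast
  then have "\<not> used_in k L"
    using assms(2) used_in_wf_layer by blast
  then show "apply_layer L y k = x k"
    using \<open>y k = x k\<close> apply_layer_unused by simp
qed simp

definition unused_after :: "network \<Rightarrow> nat \<Rightarrow> nat \<Rightarrow> bool" where
  "unused_after C d k \<longleftrightarrow> (\<forall>d'. d < d' \<longrightarrow> d' \<le> length C \<longrightarrow> \<not> used_in k (layer_of C d'))"

lemma net_output_unused_after:
  assumes "d \<le> length C" "unused_after C d k"
  shows "net_output C x k = run C d x k"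
proof -
  have "net_output C x = foldl (\<lambda>y L. apply_layer L y) (run C d x) (drop d C)"
    unfolding net_output_def run_def
    using foldl_append[of _ x "take d C" "drop d C"] by simp
  moreover have "\<not> used_in k L" if "L \<in> set (drop d C)" for L
  proof -
    obtain t where "t < length C - d" "L = layer_of C (d + t + 1)"
      using \<open>L \<in> set (drop d C)\<close> by (auto simp: in_set_conv_nth layer_of_def add.commute)
    then show ?thesis
      using assms(2) unfolding unused_after_def by auto
  qed
  ultimately show ?thesis
    by (simp add: foldl_apply_layer_invariant[where P = "\<lambda>y. y k = run C d x k"] apply_layer_unused)
qed

section \<open>Weights of 0/1 inputs\<close>

definition weight :: "nat \<Rightarrow> (nat \<Rightarrow> nat) \<Rightarrow> nat" where
  "weight n x = (\<Sum>k = 1..n. x k)"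

lemma apply_layer_weight:
  assumes "wf_layer n L"
  shows "weight n (apply_layer L y) = weight n y"
proof -
  define U where "U = (\<Union>c\<in>L. {fst c, snd c})"
  have "L \<subseteq> {1..n} \<times> {1..n}"
    using wf_layer_bounds[OF assms] by fastforce
  then have "finite L"
    by (rule finite_subset) simp
  have "U \<subseteq> {1..n}"
    using wf_layer_bounds[OF assms] unfolding U_def by fastforce
  have sum_U: "sum g U = (\<Sum>c\<in>L. sum g {fst c, snd c})" for g :: "nat \<Rightarrow> nat"
    unfolding U_def using \<open>finite L\<close> assms
    by (intro sum.UNION_disjoint) (auto simp: wf_layer_def)
  have "sum (apply_layer L y) {fst c, snd c} = sum y {fst c, snd c}" if "c \<in> L" for c
  proof -
    obtain a b where c: "c = (a, b)" and "(a, b) \<in> L"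
      using \<open>c \<in> L\<close> by (cases c) simp
    then have "a \<noteq> b"
      using wf_layer_bounds[OF assms] by blast
    then show ?thesis
      using c apply_layer_fst[OF assms \<open>(a, b) \<in> L\<close>] apply_layer_snd[OF assms \<open>(a, b) \<in> L\<close>]
      by simp
  qed
  then have "sum (apply_layer L y) U = sum y U"
    unfolding sum_U by (rule sum.cong[OF refl])
  moreover have "sum (apply_layer L y) ({1..n} - U) = sum y ({1..n} - U)"
    by (rule sum.cong[OF refl]) (use apply_layer_unused in \<open>force simp: U_def used_in_def\<close>)
  moreover have "sum g {1..n} = sum g ({1..n} - U) + sum g U" for g :: "nat \<Rightarrow> nat"
    using \<open>U \<subseteq> {1..n}\<close> by (intro sum.subset_diff) auto
  ultimately show ?thesis
    unfolding weight_def by simp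
qed

lemma run_weight:
  assumes "wf_network n C"
  shows "weight n (run C l x) = weight n x"
proof (rule run_invariant[where P = "\<lambda>y. weight n y = weight n x"])
  fix L y assume "L \<in> set C" "weight n y = weight n x"
  then show "weight n (apply_layer L y) = weight n x"
    using assms apply_layer_weight unfolding wf_network_def by metis
qed simp

lemma weight_fun_upd:
  assumes "k \<in> {1..n}"
  shows "weight n (x(k := v)) + x k = weight n x + v"
  using assms sum.remove[of "{1..n}" k "x(k := v)"] sum.remove[of "{1..n}" k x]
  unfolding weight_def by simp

lemma binary_weight_eq_card:
  assumes "binary_input n x"
  shows "weight n x = card {k \<in> {1..n}. x k = 1}"
proof -
  have "weight n x = (\<Sum>k = 1..n. if x k = 1 then 1 else 0)"
    unfolding weight_def using assms by (intro sum.cong) (auto simp: binary_input_def)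
  then show ?thesis
    by (simp add: sum.If_cases Int_def)
qed

lemma sorted_binary_one_iff:
  assumes "sorted_on n y" "binary_input n y" "k \<in> {1..n}"
  shows "y k = 1 \<longleftrightarrow> n - k < weight n y"
proof
  assume "y k = 1"
  have "{k..n} \<subseteq> {m \<in> {1..n}. y m = 1}"
  proof
    fix m assume m: "m \<in> {k..n}"
    then have "y k \<le> y m" "y m \<in> {0, 1}"
      using assms unfolding sorted_on_def binary_input_def by auto
    then show "m \<in> {m \<in> {1..n}. y m = 1}"
      using m assms(3) \<open>y k = 1\<close> by auto
  qed
  then have "card {k..n} \<le> weight n y"
    unfolding binary_weight_eq_card[OF assms(2)] by (intro card_mono) auto
  then show "n - k < weight n y"
    using assms(3) by auto
next
  assume "n - k < weight n y"
  show "y k = 1"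
  proof (rule ccontr)
    assume "y k \<noteq> 1"
    then have "y k = 0"
      using assms(2,3) unfolding binary_input_def by blast
    have "{m \<in> {1..n}. y m = 1} \<subseteq> {Suc k..n}"
    proof
      fix m assume m: "m \<in> {m \<in> {1..n}. y m = 1}"
      have "\<not> m \<le> k"
      proof
        assume "m \<le> k"
        moreover have "1 \<le> m" "k \<le> n"
          using m assms(3) by auto
        ultimately have "y m \<le> y k"
          using assms(1) unfolding sorted_on_def by blast
        then show False
          using m \<open>y k = 0\<close> by simp
      qed
      then show "m \<in> {Suc k..n}"
        using m by simp
    qed
    then have "weight n y \<le> card {Suc k..n}"
      unfolding binary_weight_eq_card[OF assms(2)] by (intro card_mono) auto
    then show False
      using \<open>n - k < weight n y\<close> by simp
  qed
qed

lemma binary_exists_raisable: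
  assumes "binary_input n x" "binary_input n y" "weight n x \<le> weight n y"
    and "k \<in> {1..n}" "x k \<noteq> y k"
  obtains q where "q \<in> {1..n}" "x q = 0" "y q = 1"
proof -
  have "\<exists>q\<in>{1..n}. x q = 0 \<and> y q = 1"
  proof (rule ccontr)
    assume "\<not> ?thesis"
    then have "\<forall>m\<in>{1..n}. y m \<le> x m"
      using assms(1,2) unfolding binary_input_def by fastforce
    moreover have "y k < x k"
      using calculation assms(4,5) by fastforce
    ultimately have "weight n y < weight n x"
      unfolding weight_def using assms(4) by (intro sum_strict_mono_ex1) auto
    then show False
      using assms(3) by simp
  qed
  then show thesis
    using that by blast
qed

lemma binary_band_step:
  assumes "a < b"
    and "binary_input n x" "weight n x \<in> {a..b}"
    and "binary_input n y" "weight n y \<in> {a..b}"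
    and "k \<in> {1..n}" "x k \<noteq> y k"
  obtains q where "q \<in> {1..n}" "x q \<noteq> y q"
    and "binary_input n (x(q := y q))" "weight n (x(q := y q)) \<in> {a..b}"
    and "x \<le> x(q := y q) \<or> x(q := y q) \<le> x"
proof (cases "weight n x < b \<and> weight n x \<le> weight n y")
  case True
  obtain q where q: "q \<in> {1..n}" "x q = 0" "y q = 1"
    using binary_exists_raisable[OF assms(2,4) _ assms(6,7)] True by blast
  have "weight n (x(q := 1)) = weight n x + 1"
    using weight_fun_upd[OF q(1), of x 1] q(2) by simp
  moreover have "binary_input n (x(q := 1))" "x \<le> x(q := 1)"
    using assms(2) q(2) by (auto simp: binary_input_def le_fun_def)
  ultimately show thesis
    using that[of q] q True assms(3) by simp
next
  case False
  then have "weight n y \<le> weight n x" "a < weight n x"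
    using assms(1,3,5) by auto
  obtain p where p: "p \<in> {1..n}" "y p = 0" "x p = 1"
    using binary_exists_raisable[OF assms(4,2) \<open>weight n y \<le> weight n x\<close> assms(6)] assms(7) by metis
  have "weight n (x(p := 0)) + 1 = weight n x"
    using weight_fun_upd[OF p(1), of x 0] p(3) by simp
  moreover have "binary_input n (x(p := 0))" "x(p := 0) \<le> x"
    using assms(2) by (auto simp: binary_input_def le_fun_def)
  ultimately show thesis
    using that[of p] p \<open>a < weight n x\<close> assms(3) by simp
qed

lemma binary_band_connected:
  fixes P :: "(nat \<Rightarrow> nat) \<Rightarrow> bool"
  assumes "a < b"
    and comparable: "\<And>x y. binary_input n x \<Longrightarrow> binary_input n y \<Longrightarrow> x \<le> y \<Longrightarrow>
      weight n x \<in> {a..b} \<Longrightarrow> weight n y \<in> {a..b} \<Longrightarrow> P x = P y"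
    and "binary_input n x" "weight n x \<in> {a..b}"
    and "binary_input n y" "weight n y \<in> {a..b}"
    and "\<forall>k. k \<notin> {1..n} \<longrightarrow> x k = y k"
  shows "P x = P y"
  using assms(3-)
proof (induction "card {k \<in> {1..n}. x k \<noteq> y k}" arbitrary: x rule: less_induct)
  case less
  show ?case
  proof (cases "\<exists>k\<in>{1..n}. x k \<noteq> y k")
    case False
    then have "x = y"
      using less.prems(5) by blast
    then show ?thesis
      by simp
  next
    case True
    then obtain k where "k \<in> {1..n}" "x k \<noteq> y k"
      by blast
    then obtain q where q: "q \<in> {1..n}" "x q \<noteq> y q"
      and x': "binary_input n (x(q := y q))" "weight n (x(q := y q)) \<in> {a..b}"
      and comparable_x': "x \<le> x(q := y q) \<or> x(q := y q) \<le> x"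
      by (rule binary_band_step[OF \<open>a < b\<close> less.prems(1-4)])
    have "{k \<in> {1..n}. (x(q := y q)) k \<noteq> y k} = {k \<in> {1..n}. x k \<noteq> y k} - {q}"
      by auto
    then have "card {k \<in> {1..n}. (x(q := y q)) k \<noteq> y k} < card {k \<in> {1..n}. x k \<noteq> y k}"
      using q card_Diff1_less[of "{k \<in> {1..n}. x k \<noteq> y k}" q] by simp
    moreover have "\<forall>k. k \<notin> {1..n} \<longrightarrow> (x(q := y q)) k = y k"
      using less.prems(5) by simp
    ultimately have "P (x(q := y q)) = P y"
      by (rule less.hyps[OF _ x' less.prems(3,4)])
    moreover have "P x = P (x(q := y q))"
      using comparable[OF less.prems(1) x'(1) _ less.prems(2) x'(2)]
        comparable[OF x'(1) less.prems(1) _ x'(2) less.prems(2)] comparable_x' by blast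
    ultimately show ?thesis
      by simp
  qed
qed

lemma sorting_network_output_one_iff:
  assumes "sorting_network n C" "binary_input n x" "k \<in> {1..n}"
  shows "net_output C x k = 1 \<longleftrightarrow> n - k < weight n x"
proof -
  have "wf_network n C" "sorted_on n (net_output C x)"
    using assms(1,2) unfolding sorting_network_def by auto
  moreover have "binary_input n (net_output C x)" "weight n (net_output C x) = weight n x"
    unfolding net_output_def using run_binary[OF _ assms(2)] run_weight calculation(1) by auto
  ultimately show ?thesis
    using sorted_binary_one_iff[OF _ _ assms(3)] by metis
qed

locale final_comparator =
  fixes n :: nat and C :: network and d i j :: nat
  assumes sorting: "sorting_network n C"
    and layer: "1 \<le> d" "d \<le> length C"
    and comparator: "(i, j) \<in> layer_of C d"
    and unused: "unused_after C d i" "unused_after C d j"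
begin

abbreviation before :: "(nat \<Rightarrow> nat) \<Rightarrow> nat \<Rightarrow> nat" where
  "before x \<equiv> run C (d - 1) x"

lemma wf: "wf_network n C"
  using sorting unfolding sorting_network_def by simp

lemma wf_comparator_layer: "wf_layer n (layer_of C d)"
  using wf layer unfolding wf_network_def layer_of_def by simp

lemma channels: "1 \<le> i" "i < j" "j \<le> n"
  using wf_layer_bounds[OF wf_comparator_layer comparator] by simp_all

lemma net_output_comparator:
  "net_output C x i = min (before x i) (before x j)"
  "net_output C x j = max (before x i) (before x j)"
  using net_output_unused_after[OF layer(2)] unused run_layer_of[OF layer]
    apply_layer_fst[OF wf_comparator_layer comparator]
    apply_layer_snd[OF wf_comparator_layer comparator] by simp_all

lemma before_binary:
  assumes "binary_input n x"
  shows "before x i \<in> {0, 1}" "before x j \<in> {0, 1}"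
  using run_binary[OF wf assms] channels unfolding binary_input_def by simp_all

lemma before_on_band:
  assumes "binary_input n x" "n - j < weight n x" "weight n x \<le> n - i"
  shows "{before x i, before x j} = {0, 1}"
proof -
  have "net_output C x i \<noteq> 1" "net_output C x j = 1"
    using sorting_network_output_one_iff[OF sorting assms(1)] assms(2,3) channels by simp_all
  then have "min (before x i) (before x j) = 0" "max (before x i) (before x j) = 1"
    using net_output_comparator before_binary[OF assms(1)] by auto
  then show ?thesis
    using before_binary[OF assms(1)] by auto
qed

lemma swap_imp_band:
  assumes "binary_input n x" "before x j < before x i"
  shows "n - j < weight n x" "weight n x \<le> n - i"
proof -
  have "net_output C x i = 0" "net_output C x j = 1"
    using assms net_output_comparator before_binary[OF assms(1)] by auto
  then show "n - j < weight n x" "weight n x \<le> n - i"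
    using sorting_network_output_one_iff[OF sorting assms(1), of i]
      sorting_network_output_one_iff[OF sorting assms(1), of j] channels by auto
qed

lemma swap_throughout_band:
  assumes "i + 1 < j"
    and "binary_input n x" "before x j < before x i"
    and "binary_input n y" "n - j < weight n y" "weight n y \<le> n - i"
    and "\<forall>k. k \<notin> {1..n} \<longrightarrow> x k = y k"
  shows "before y j < before y i"
proof -
  have "(before x j < before x i) = (before y j < before y i)"
  proof (rule binary_band_connected[where P = "\<lambda>u. before u j < before u i" and n = n
        and a = "Suc (n - j)" and b = "n - i"])
    show "Suc (n - j) < n - i"
      using assms(1) channels by simp
    fix u v
    assume "binary_input n u" "binary_input n v" "u \<le> v"
      and "weight n u \<in> {Suc (n - j)..n - i}" "weight n v \<in> {Suc (n - j)..n - i}"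
    then have "{before u i, before u j} = {0, 1}" "{before v i, before v j} = {0, 1}"
      "before u i \<le> before v i" "before u j \<le> before v j"
      using before_on_band run_mono[OF \<open>u \<le> v\<close>] by (auto simp: le_fun_def)
    then show "(before u j < before u i) = (before v j < before v i)"
      by (auto simp: doubleton_eq_iff)
  qed (use assms swap_imp_band[OF assms(2,3)] in auto)
  then show ?thesis
    using assms(3) by simp
qed

end

theorem corollary1:
  fixes n :: nat and C :: network and d i j :: nat
  assumes "sorting_network n C"
    and "no_redundant n C"
    and "1 \<le> d" and "d \<le> length C"
    and "(i, j) \<in> layer_of C d"
    and "j > i + 1"
  shows "\<exists>d'. d < d' \<and> d' \<le> length C \<and>
           (used_in i (layer_of C d') \<or> used_in j (layer_of C d'))"
proof (rule ccontr)
  assume "\<not> ?thesis"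
  then interpret final_comparator n C d i j
    using assms(1,3-5) by unfold_locales (auto simp: unused_after_def)
  obtain x where x: "binary_input n x" "before x j < before x i"
    using assms(2-5) unfolding no_redundant_def redundant_def by fastforce
  define z where "z = net_output C x"
  have z: "binary_input n z" "sorted_on n z" "weight n z = weight n x"
    "\<forall>k. k \<notin> {1..n} \<longrightarrow> x k = z k"
    using sorting x(1) run_binary[OF wf] run_weight[OF wf] run_outside_channels[OF wf]
    unfolding z_def net_output_def sorting_network_def by auto
  have "before z j < before z i"
    using swap_throughout_band[OF assms(6) x z(1)] swap_imp_band[OF x] z(3,4) by simp
  moreover have "before z = z"
    using run_sorted[OF wf z(2)] .
  moreover have "z i \<le> z j"
    using z(2) channels unfolding sorted_on_def by simp
  ultimately show False
    by simp
qed

end
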